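(* Let $\tau_1=(V,E_1)$ and $\tau_2=(V,E_2)$ be two rooted trees on the same finite vertex set $V$ having the same multi-index, i.e. every vertex $v\in V$ has the same number of children in $\tau_1$ as in $\tau_2$. Then there exists a bijection $\sigma$ of $V$ such that $\sigma.\tau_1=\tau_2$.
   Context: A rooted tree on a finite vertex set $V\subset\mathbb{N}$ is a set $E$ of ordered pairs of elements of $V$ (an edge $(v,w)$ means $w$ is a child of $v$) such that exactly one vertex $r$ (the root) has no parent, every other vertex has exactly one parent, and every vertex is connected to the root by following parents. For a bijection $\sigma$ of $V$ and a rooted tree $\tau=(V,E)$, set $E_\sigma=\{(v,\sigma(w)):(v,w)\in E\}$ and $\sigma.\tau=(V,E_\sigma)$; the equality $\sigma.\tau_1=\tau_2$ means $(E_1)_\sigma=E_2$. *)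

theory Defs
  imports Main
begin

definition rooted_tree :: "nat set \<Rightarrow> (nat \<times> nat) set \<Rightarrow> bool" where
  "rooted_tree V E \<longleftrightarrow> finite V \<and> E \<subseteq> V \<times> V \<and>
     (\<exists>!r. r \<in> V \<and> \<not> (\<exists>v. (v, r) \<in> E)) \<and>
     (\<forall>w\<in>V. (\<exists>v. (v, w) \<in> E) \<longrightarrow> (\<exists>!v. (v, w) \<in> E)) \<and>
     (\<forall>r\<in>V. \<not> (\<exists>v. (v, r) \<in> E) \<longrightarrow> (\<forall>w\<in>V. (r, w) \<in> E\<^sup>*))"

definition children :: "(nat \<times> nat) set \<Rightarrow> nat \<Rightarrow> nat set" where
  "children E v = {w. (v, w) \<in> E}"

definition act_edges :: "(nat \<Rightarrow> nat) \<Rightarrow> (nat \<times> nat) set \<Rightarrow> (nat \<times> nat) set" where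
  "act_edges \<sigma> E = {(v, \<sigma> w) | v w. (v, w) \<in> E}"

end

theory Submission
  imports Defs "HOL-Library.Disjoint_Sets"
begin

text \<open>The action only relabels children, so it suffices to map every children set of the first
  tree bijectively onto the corresponding children set of the second (they are finite of equal
  size) and the root onto the root. In a rooted tree the vertex set is the disjoint union of the
  root and all children sets, so these maps glue to a bijection of \<open>V\<close>.\<close>

lemma children_act_edges: "children (act_edges \<sigma> E) v = \<sigma> ` children E v"
  unfolding children_def act_edges_def by auto

lemma edges_eq_iff_children_eq: "E = E' \<longleftrightarrow> (\<forall>v. children E v = children E' v)"
  unfolding children_def by auto

lemma act_edges_eq_iff: "act_edges \<sigma> E = E' \<longleftrightarrow> (\<forall>v. \<sigma> ` children E v = children E' v)"
  by (simp add: edges_eq_iff_children_eq children_act_edges)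

lemma rooted_tree_edges_subset: "rooted_tree V E \<Longrightarrow> E \<subseteq> V \<times> V"
  by (simp add: rooted_tree_def)

lemma rooted_tree_parent_unique:
  assumes "rooted_tree V E" and "(v, w) \<in> E" and "(v', w) \<in> E"
  shows "v = v'"
proof -
  have "\<forall>w\<in>V. (\<exists>v. (v, w) \<in> E) \<longrightarrow> (\<exists>!v. (v, w) \<in> E)"
    using assms(1) by (simp add: rooted_tree_def)
  then show ?thesis
    using assms rooted_tree_edges_subset by blast
qed

lemma rooted_tree_children_subset: "rooted_tree V E \<Longrightarrow> children E v \<subseteq> V"
  using rooted_tree_edges_subset unfolding children_def by blast

lemma rooted_tree_children_outside: "rooted_tree V E \<Longrightarrow> v \<notin> V \<Longrightarrow> children E v = {}"
  using rooted_tree_edges_subset unfolding children_def by blast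

lemma rooted_tree_finite_children: "rooted_tree V E \<Longrightarrow> finite (children E v)"
  using rooted_tree_children_subset finite_subset by (metis rooted_tree_def)

lemma rooted_tree_disjoint_children: "rooted_tree V E \<Longrightarrow> disjoint_family (children E)"
  unfolding disjoint_family_on_def children_def using rooted_tree_parent_unique by blast

lemma rooted_tree_root_children_partition:
  assumes "rooted_tree V E"
  obtains r where "r \<notin> (\<Union>v. children E v)" and "V = insert r (\<Union>v. children E v)"
proof -
  have "\<exists>!r. r \<in> V \<and> \<not> (\<exists>v. (v, r) \<in> E)"
    using assms by (simp add: rooted_tree_def)
  then obtain r where r: "r \<in> V" "\<forall>v. (v, r) \<notin> E"
    and unique: "\<And>x. x \<in> V \<Longrightarrow> \<forall>v. (v, x) \<notin> E \<Longrightarrow> x = r"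
    by blast
  have "V \<subseteq> insert r (\<Union>v. children E v)"
    using unique unfolding children_def by blast
  moreover have "insert r (\<Union>v. children E v) \<subseteq> V"
    using r(1) rooted_tree_children_subset[OF assms] by blast
  ultimately show thesis
    using that r(2) unfolding children_def by blast
qed

lemma same_multi_index_children_bij:
  assumes "rooted_tree V E1" and "rooted_tree V E2"
    and "\<forall>v\<in>V. card (children E1 v) = card (children E2 v)"
  shows "\<exists>f. bij_betw f (children E1 v) (children E2 v)"
proof (cases "v \<in> V")
  case True
  then show ?thesis
    using assms by (intro finite_same_card_bij rooted_tree_finite_children) auto
next
  case False
  then show ?thesis
    using rooted_tree_children_outside[OF assms(1)] rooted_tree_children_outside[OF assms(2)]
    by (metis bij_betw_id)
qed

theorem proposition3p6:
  fixes V :: "nat set" and E1 E2 :: "(nat \<times> nat) set"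
  assumes "rooted_tree V E1" and "rooted_tree V E2"
    and "\<forall>v\<in>V. card (children E1 v) = card (children E2 v)"
  shows "\<exists>\<sigma>. bij_betw \<sigma> V V \<and> act_edges \<sigma> E1 = E2"
proof -
  obtain r1 where r1: "r1 \<notin> (\<Union>v. children E1 v)" "V = insert r1 (\<Union>v. children E1 v)"
    using rooted_tree_root_children_partition[OF assms(1)] by blast
  obtain r2 where r2: "r2 \<notin> (\<Union>v. children E2 v)" "V = insert r2 (\<Union>v. children E2 v)"
    using rooted_tree_root_children_partition[OF assms(2)] by blast
  obtain F where F: "\<And>v. bij_betw (F v) (children E1 v) (children E2 v)"
    using same_multi_index_children_bij[OF assms] by metis
  define \<sigma> where "\<sigma> w = (if w = r1 then r2 else F (THE v. w \<in> children E1 v) w)" for w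
  have \<sigma>_children: "bij_betw \<sigma> (children E1 v) (children E2 v)" for v
  proof -
    have "(THE v'. w \<in> children E1 v') = v" if "w \<in> children E1 v" for w
      using that rooted_tree_disjoint_children[OF assms(1)] unfolding disjoint_family_on_def by blast
    then have "F v w = \<sigma> w" if "w \<in> children E1 v" for w
      using that r1(1) unfolding \<sigma>_def by auto
    then show ?thesis
      using F bij_betw_cong by blast
  qed
  have "bij_betw \<sigma> ({r1} \<union> (\<Union>v. children E1 v)) ({r2} \<union> (\<Union>v. children E2 v))"
    using \<sigma>_children r2(1)
    by (intro bij_betw_combine bij_betw_UNION_disjoint rooted_tree_disjoint_children[OF assms(2)])
       (auto simp: \<sigma>_def)
  then have "bij_betw \<sigma> V V"
    using r1(2) r2(2) by simp
  moreover have "act_edges \<sigma> E1 = E2"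
    using \<sigma>_children by (simp add: act_edges_eq_iff bij_betw_imp_surj_on)
  ultimately show ?thesis by blast
qed

end
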